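(* Let $R$ be a semiring, $f, g: N \to M$ homomorphisms of left $R$-semimodules, and let $\sim_{(f,g)}$ be the relation on $M$ defined by: $m \sim_{(f,g)} m'$ iff there exist $k\ge 1$, $m_1,\dots,m_k \in M$ and $n_1,\dots,n_k,n'_1,\dots,n'_k \in N$ with $m = m_1 + f(n_1) + g(n'_1)$, $m_i + f(n'_i) + g(n_i) = m_{i+1} + f(n_{i+1}) + g(n'_{i+1})$ for $1\le i\le k-1$, and $m_k + f(n'_k) + g(n_k) = m'$. Let $\nu: M \to M/{\sim_{(f,g)}}$ be the canonical map onto the quotient semimodule. Then $\nu$ is a coequalizer of $f$ and $g$, i.e. (1) $\nu \circ f = \nu \circ g$, and (2) for every left $R$-semimodule $P$ and every homomorphism $h: M \to P$ with $h \circ f = h \circ g$ there is a unique homomorphism $h': M/{\sim_{(f,g)}} \to P$ with $h' \circ \nu = h$.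
   Context: A semiring $R$ is a commutative monoid $(R,+,0)$ with an associative multiplication with unit $1$, distributive on both sides, and with $0r = 0 = r0$. A left $R$-semimodule is a commutative monoid $(M,+,0)$ with a map $R\times M \to M$ satisfying $(rr')m = r(r'm)$, $(r+r')m = rm + r'm$, $r(m+m') = rm + rm'$, $1m = m$, $0m = 0 = r0$; homomorphisms are additive maps with $f(rm)=rf(m)$. A congruence relation on $M$ is an equivalence relation $\sim$ with $m\sim m' \Rightarrow m+n\sim m'+n$ and $rm \sim rm'$; the relation $\sim_{(f,g)}$ is one, and the set $M/{\sim}$ of equivalence classes $\bar m$ is a left $R$-semimodule via $\bar m + \bar m' = \overline{m+m'}$, $r\bar m = \overline{rm}$, with $\nu(m) = \bar m$ a homomorphism. *)

theory Defs
  imports Main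
begin

text \<open>Semirings are rendered by the type class constraint semiring_0 plus monoid_mult
(commutative additive monoid, associative multiplication with unit, distributivity,
absorbing zero; no assumption 0 \<noteq> 1).\<close>

record ('r, 'a) semimod =
  carrier :: "'a set"
  add :: "'a \<Rightarrow> 'a \<Rightarrow> 'a"
  zero :: "'a"
  smul :: "'r \<Rightarrow> 'a \<Rightarrow> 'a"

definition semimodule :: "('r::{semiring_0, monoid_mult}, 'a) semimod \<Rightarrow> bool" where
  "semimodule M \<longleftrightarrow>
     zero M \<in> carrier M \<and>
     (\<forall>x\<in>carrier M. \<forall>y\<in>carrier M. add M x y \<in> carrier M) \<and>
     (\<forall>r. \<forall>x\<in>carrier M. smul M r x \<in> carrier M) \<and>
     (\<forall>x\<in>carrier M. \<forall>y\<in>carrier M. \<forall>z\<in>carrier M. add M (add M x y) z = add M x (add M y z)) \<and>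
     (\<forall>x\<in>carrier M. \<forall>y\<in>carrier M. add M x y = add M y x) \<and>
     (\<forall>x\<in>carrier M. add M (zero M) x = x) \<and>
     (\<forall>r r'. \<forall>x\<in>carrier M. smul M (r * r') x = smul M r (smul M r' x)) \<and>
     (\<forall>r r'. \<forall>x\<in>carrier M. smul M (r + r') x = add M (smul M r x) (smul M r' x)) \<and>
     (\<forall>r. \<forall>x\<in>carrier M. \<forall>y\<in>carrier M. smul M r (add M x y) = add M (smul M r x) (smul M r y)) \<and>
     (\<forall>x\<in>carrier M. smul M 1 x = x) \<and>
     (\<forall>x\<in>carrier M. smul M 0 x = zero M) \<and>
     (\<forall>r. smul M r (zero M) = zero M)"

definition semimod_hom ::
  "('r::{semiring_0, monoid_mult}, 'a) semimod \<Rightarrow> ('r, 'b) semimod \<Rightarrow> ('a \<Rightarrow> 'b) \<Rightarrow> bool" where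
  "semimod_hom M P h \<longleftrightarrow>
     (\<forall>x\<in>carrier M. h x \<in> carrier P) \<and>
     (\<forall>x\<in>carrier M. \<forall>y\<in>carrier M. h (add M x y) = add P (h x) (h y)) \<and>
     (\<forall>r. \<forall>x\<in>carrier M. h (smul M r x) = smul P r (h x))"

definition fg_rel ::
  "('r::{semiring_0, monoid_mult}, 'n) semimod \<Rightarrow> ('r, 'm) semimod \<Rightarrow> ('n \<Rightarrow> 'm) \<Rightarrow> ('n \<Rightarrow> 'm)
     \<Rightarrow> ('m \<times> 'm) set" where
  "fg_rel N M f g = {(m, m'). m \<in> carrier M \<and> m' \<in> carrier M \<and>
     (\<exists>k::nat. k \<ge> 1 \<and> (\<exists>ms ns ns'.
        (\<forall>i\<in>{1..k}. ms i \<in> carrier M \<and> ns i \<in> carrier N \<and> ns' i \<in> carrier N) \<and>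
        m = add M (add M (ms 1) (f (ns 1))) (g (ns' 1)) \<and>
        (\<forall>i\<in>{1..k-1}. add M (add M (ms i) (f (ns' i))) (g (ns i)) =
                        add M (add M (ms (i+1)) (f (ns (i+1)))) (g (ns' (i+1)))) \<and>
        add M (add M (ms k) (f (ns' k))) (g (ns k)) = m'))}"

definition quot_semimod ::
  "('r::{semiring_0, monoid_mult}, 'm) semimod \<Rightarrow> ('m \<times> 'm) set \<Rightarrow> ('r, 'm set) semimod" where
  "quot_semimod M rel =
     \<lparr> carrier = carrier M // rel,
       add = (\<lambda>X Y. SOME Z. \<exists>x\<in>X. \<exists>y\<in>Y. Z = rel `` {add M x y}),
       zero = rel `` {zero M},
       smul = (\<lambda>r X. SOME Z. \<exists>x\<in>X. Z = rel `` {smul M r x}) \<rparr>"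

definition quot_map :: "('m \<times> 'm) set \<Rightarrow> 'm \<Rightarrow> 'm set" where
  "quot_map rel m = rel `` {m}"

end

theory Submission
  imports Defs
begin

(*
  The relation ~(f,g) is the transitive closure of the elementary moves
  a + f x + g y  ~>  a + f y + g x: the link equations of a zig-zag say precisely that
  consecutive moves compose.  The moves form a reflexive, symmetric relation that is stable
  under translation and scalar multiplication, so ~(f,g) is a congruence of semimodules
  relating f x to g x; and a homomorphism h with h o f = h o g is constant on every move,
  hence on ~(f,g).  The coequalizer property is then the universal property of the quotient
  of a semimodule by an arbitrary congruence.
*)

locale left_semimodule =
  fixes M :: "('r::{semiring_0, monoid_mult}, 'a) semimod"
  assumes semimodule: "semimodule M"
begin

lemma zero_closed [simp]: "zero M \<in> carrier M"
  using semimodule unfolding semimodule_def by auto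

lemma add_closed [simp]: "x \<in> carrier M \<Longrightarrow> y \<in> carrier M \<Longrightarrow> add M x y \<in> carrier M"
  using semimodule unfolding semimodule_def by auto

lemma smul_closed [simp]: "x \<in> carrier M \<Longrightarrow> smul M r x \<in> carrier M"
  using semimodule unfolding semimodule_def by auto

lemma a_assoc:
  "x \<in> carrier M \<Longrightarrow> y \<in> carrier M \<Longrightarrow> z \<in> carrier M \<Longrightarrow> add M (add M x y) z = add M x (add M y z)"
  using semimodule unfolding semimodule_def by auto

lemma a_comm: "x \<in> carrier M \<Longrightarrow> y \<in> carrier M \<Longrightarrow> add M x y = add M y x"
  using semimodule unfolding semimodule_def by auto

lemma a_right_comm:
  "x \<in> carrier M \<Longrightarrow> y \<in> carrier M \<Longrightarrow> z \<in> carrier M \<Longrightarrow> add M (add M x y) z = add M (add M x z) y"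
  by (metis a_assoc a_comm add_closed)

lemma l_zero: "x \<in> carrier M \<Longrightarrow> add M (zero M) x = x"
  using semimodule unfolding semimodule_def by auto

lemma r_zero: "x \<in> carrier M \<Longrightarrow> add M x (zero M) = x"
  by (metis a_comm l_zero zero_closed)

lemma smul_assoc: "x \<in> carrier M \<Longrightarrow> smul M (r * s) x = smul M r (smul M s x)"
  using semimodule unfolding semimodule_def by auto

lemma smul_l_distr: "x \<in> carrier M \<Longrightarrow> smul M (r + s) x = add M (smul M r x) (smul M s x)"
  using semimodule unfolding semimodule_def by auto

lemma smul_r_distr:
  "x \<in> carrier M \<Longrightarrow> y \<in> carrier M \<Longrightarrow> smul M r (add M x y) = add M (smul M r x) (smul M r y)"
  using semimodule unfolding semimodule_def by auto

lemma smul_one: "x \<in> carrier M \<Longrightarrow> smul M 1 x = x"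
  using semimodule unfolding semimodule_def by auto

lemma smul_zero_left: "x \<in> carrier M \<Longrightarrow> smul M 0 x = zero M"
  using semimodule unfolding semimodule_def by auto

lemma smul_zero_right: "smul M r (zero M) = zero M"
  using semimodule unfolding semimodule_def by auto

end

lemma semimod_hom_closed: "semimod_hom M P h \<Longrightarrow> x \<in> carrier M \<Longrightarrow> h x \<in> carrier P"
  unfolding semimod_hom_def by blast

lemma semimod_hom_add:
  "semimod_hom M P h \<Longrightarrow> x \<in> carrier M \<Longrightarrow> y \<in> carrier M \<Longrightarrow> h (add M x y) = add P (h x) (h y)"
  unfolding semimod_hom_def by blast

lemma semimod_hom_smul: "semimod_hom M P h \<Longrightarrow> x \<in> carrier M \<Longrightarrow> h (smul M r x) = smul P r (h x)"
  unfolding semimod_hom_def by blast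

lemma semimod_hom_zero:
  assumes "left_semimodule M" and "left_semimodule P" and h: "semimod_hom M P h"
  shows "h (zero M) = zero P"
proof -
  interpret M: left_semimodule M by fact
  interpret P: left_semimodule P by fact
  have "h (zero M) = h (smul M 0 (zero M))" by (simp add: M.smul_zero_left)
  also have "\<dots> = smul P 0 (h (zero M))" by (simp add: semimod_hom_smul[OF h])
  also have "\<dots> = zero P" by (simp add: P.smul_zero_left semimod_hom_closed[OF h])
  finally show ?thesis .
qed

lemma trancl_closed_under_map:
  assumes "\<And>x y. (x, y) \<in> r \<Longrightarrow> (\<phi> x, \<phi> y) \<in> r" and "(a, b) \<in> r\<^sup>+"
  shows "(\<phi> a, \<phi> b) \<in> r\<^sup>+"
  using assms(2) by induction (auto intro: assms(1) trancl_into_trancl)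

lemma congruent_trancl:
  assumes "\<phi> respects r"
  shows "\<phi> respects r\<^sup>+"
proof (rule congruentI)
  fix a b assume "(a, b) \<in> r\<^sup>+"
  then show "\<phi> a = \<phi> b"
    by (induction rule: trancl_induct) (use assms in \<open>auto dest: congruentD\<close>)
qed

lemma equiv_trancl:
  assumes "r \<subseteq> A \<times> A" and "refl_on A r" and "sym r"
  shows "equiv A (r\<^sup>+)"
proof (rule equivI)
  show "r\<^sup>+ \<subseteq> A \<times> A" using assms(1) by (rule trancl_subset_Sigma)
  show "refl_on A (r\<^sup>+)" using assms(2) unfolding refl_on_def by blast
  show "sym (r\<^sup>+)" using assms(3) by (rule sym_trancl)
qed (rule trans_trancl)

locale semimod_congruence = left_semimodule M for M :: "('r::{semiring_0, monoid_mult}, 'a) semimod" +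
  fixes R :: "('a \<times> 'a) set"
  assumes equiv: "equiv (carrier M) R"
    and add_cong: "(a, a') \<in> R \<Longrightarrow> (b, b') \<in> R \<Longrightarrow> (add M a b, add M a' b') \<in> R"
    and smul_cong: "(a, a') \<in> R \<Longrightarrow> (smul M r a, smul M r a') \<in> R"
begin

abbreviation Q where "Q \<equiv> quot_semimod M R"
abbreviation \<nu> where "\<nu> \<equiv> quot_map R"

lemma mem_quot_map_iff: "x \<in> \<nu> m \<longleftrightarrow> (m, x) \<in> R"
  unfolding quot_map_def by blast

lemma quot_map_self: "m \<in> carrier M \<Longrightarrow> m \<in> \<nu> m"
  unfolding quot_map_def using equiv by (rule equiv_class_self)

lemma quot_map_eq: "(m, m') \<in> R \<Longrightarrow> \<nu> m = \<nu> m'"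
  unfolding quot_map_def using equiv by (rule equiv_class_eq)

lemma carrier_quot: "carrier Q = carrier M // R"
  unfolding quot_semimod_def by simp

lemma quot_map_closed: "m \<in> carrier M \<Longrightarrow> \<nu> m \<in> carrier Q"
  unfolding carrier_quot quot_map_def by (rule quotientI)

lemma quot_cases:
  assumes "X \<in> carrier Q"
  obtains m where "m \<in> carrier M" and "X = \<nu> m"
  using assms unfolding carrier_quot quot_map_def by (auto elim: quotientE)

lemma quot_zero: "zero Q = \<nu> (zero M)"
  unfolding quot_semimod_def quot_map_def by simp

lemma quot_add:
  assumes "a \<in> carrier M" and "b \<in> carrier M"
  shows "add Q (\<nu> a) (\<nu> b) = \<nu> (add M a b)"
  unfolding quot_semimod_def semimod.simps
proof (rule some_equality)
  show "\<exists>x\<in>\<nu> a. \<exists>y\<in>\<nu> b. \<nu> (add M a b) = R `` {add M x y}"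
    using assms quot_map_self unfolding quot_map_def by blast
  fix Z assume "\<exists>x\<in>\<nu> a. \<exists>y\<in>\<nu> b. Z = R `` {add M x y}"
  then obtain x y where "(a, x) \<in> R" "(b, y) \<in> R" and Z: "Z = \<nu> (add M x y)"
    unfolding mem_quot_map_iff quot_map_def by blast
  then have "\<nu> (add M a b) = \<nu> (add M x y)" by (intro quot_map_eq add_cong)
  with Z show "Z = \<nu> (add M a b)" by simp
qed

lemma quot_smul:
  assumes "a \<in> carrier M"
  shows "smul Q r (\<nu> a) = \<nu> (smul M r a)"
  unfolding quot_semimod_def semimod.simps
proof (rule some_equality)
  show "\<exists>x\<in>\<nu> a. \<nu> (smul M r a) = R `` {smul M r x}"
    using assms quot_map_self unfolding quot_map_def by blast
  fix Z assume "\<exists>x\<in>\<nu> a. Z = R `` {smul M r x}"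
  then obtain x where "(a, x) \<in> R" and Z: "Z = \<nu> (smul M r x)"
    unfolding mem_quot_map_iff quot_map_def by blast
  then have "\<nu> (smul M r a) = \<nu> (smul M r x)" by (intro quot_map_eq smul_cong)
  with Z show "Z = \<nu> (smul M r a)" by simp
qed

lemma semimodule_quot: "semimodule Q"
  unfolding semimodule_def
proof (intro conjI ballI allI)
  show "add Q X Y \<in> carrier Q" if "X \<in> carrier Q" "Y \<in> carrier Q" for X Y
    using that by (elim quot_cases) (simp add: quot_add quot_map_closed)
  show "smul Q r X \<in> carrier Q" if "X \<in> carrier Q" for r X
    using that by (elim quot_cases) (simp add: quot_smul quot_map_closed)
  show "add Q (add Q X Y) Z = add Q X (add Q Y Z)"
    if "X \<in> carrier Q" "Y \<in> carrier Q" "Z \<in> carrier Q" for X Y Z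
    using that by (elim quot_cases) (simp add: quot_add a_assoc)
  show "add Q X Y = add Q Y X" if "X \<in> carrier Q" "Y \<in> carrier Q" for X Y
    using that by (elim quot_cases) (simp add: quot_add a_comm)
  show "add Q (zero Q) X = X" if "X \<in> carrier Q" for X
    using that by (elim quot_cases) (simp add: quot_add quot_zero l_zero)
  show "smul Q (r * s) X = smul Q r (smul Q s X)" if "X \<in> carrier Q" for r s X
    using that by (elim quot_cases) (simp add: quot_smul smul_assoc)
  show "smul Q (r + s) X = add Q (smul Q r X) (smul Q s X)" if "X \<in> carrier Q" for r s X
    using that by (elim quot_cases) (simp add: quot_smul quot_add smul_l_distr)
  show "smul Q r (add Q X Y) = add Q (smul Q r X) (smul Q r Y)"
    if "X \<in> carrier Q" "Y \<in> carrier Q" for r X Y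
    using that by (elim quot_cases) (simp add: quot_smul quot_add smul_r_distr)
  show "smul Q 1 X = X" if "X \<in> carrier Q" for X
    using that by (elim quot_cases) (simp add: quot_smul smul_one)
  show "smul Q 0 X = zero Q" if "X \<in> carrier Q" for X
    using that by (elim quot_cases) (simp add: quot_smul quot_zero smul_zero_left)
qed (simp_all add: quot_zero quot_smul quot_map_closed smul_zero_right)

lemma semimod_hom_quot_map: "semimod_hom M Q \<nu>"
  unfolding semimod_hom_def by (simp add: quot_map_closed quot_add quot_smul)

lemma quot_map_lift:
  assumes h: "semimod_hom M P h" and resp: "h respects R"
  shows "\<exists>h'. semimod_hom Q P h' \<and> (\<forall>m\<in>carrier M. h' (\<nu> m) = h m)"
proof -
  define h' where "h' X = h (SOME x. x \<in> X)" for X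
  have lift: "h' (\<nu> m) = h m" if "m \<in> carrier M" for m
  proof -
    have "(SOME x. x \<in> \<nu> m) \<in> \<nu> m" using quot_map_self[OF that] by (rule someI)
    then show ?thesis unfolding h'_def mem_quot_map_iff by (auto dest: congruentD[OF resp])
  qed
  have "semimod_hom Q P h'"
    unfolding semimod_hom_def
  proof (intro conjI ballI allI)
    show "h' X \<in> carrier P" if "X \<in> carrier Q" for X
      using that by (elim quot_cases) (simp add: lift semimod_hom_closed[OF h])
    show "h' (add Q X Y) = add P (h' X) (h' Y)" if "X \<in> carrier Q" "Y \<in> carrier Q" for X Y
      using that by (elim quot_cases) (simp add: lift quot_add semimod_hom_add[OF h])
    show "h' (smul Q r X) = smul P r (h' X)" if "X \<in> carrier Q" for r X
      using that by (elim quot_cases) (simp add: lift quot_smul semimod_hom_smul[OF h])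
  qed
  with lift show ?thesis by blast
qed

lemma quot_map_epi:
  assumes "\<forall>m\<in>carrier M. h\<^sub>1 (\<nu> m) = h\<^sub>2 (\<nu> m)" and "X \<in> carrier Q"
  shows "h\<^sub>1 X = h\<^sub>2 X"
  using assms(2) by (elim quot_cases) (simp add: assms(1))

lemma quot_universal:
  assumes "semimod_hom M P h" and "h respects R"
  shows "\<exists>h'. semimod_hom Q P h' \<and> (\<forall>m\<in>carrier M. h' (\<nu> m) = h m) \<and>
    (\<forall>h''. semimod_hom Q P h'' \<and> (\<forall>m\<in>carrier M. h'' (\<nu> m) = h m) \<longrightarrow>
      (\<forall>X\<in>carrier Q. h'' X = h' X))"
proof -
  obtain h' where hom: "semimod_hom Q P h'" and lift: "\<forall>m\<in>carrier M. h' (\<nu> m) = h m"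
    using quot_map_lift[OF assms] by blast
  have "h'' X = h' X" if "\<forall>m\<in>carrier M. h'' (\<nu> m) = h m" and "X \<in> carrier Q" for h'' X
    using that lift by (intro quot_map_epi[where h\<^sub>1 = h'' and h\<^sub>2 = h']) simp_all
  with hom lift show ?thesis by (intro exI[of _ h']) blast
qed

end

lemma fg_relI:
  assumes "m \<in> carrier M" and "m' \<in> carrier M" and "1 \<le> (k::nat)"
    and "\<forall>i\<in>{1..k}. ms i \<in> carrier M \<and> ns i \<in> carrier N \<and> ns' i \<in> carrier N"
    and "m = add M (add M (ms 1) (f (ns 1))) (g (ns' 1))"
    and "\<forall>i\<in>{1..k-1}. add M (add M (ms i) (f (ns' i))) (g (ns i)) =
                      add M (add M (ms (i+1)) (f (ns (i+1)))) (g (ns' (i+1)))"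
    and "add M (add M (ms k) (f (ns' k))) (g (ns k)) = m'"
  shows "(m, m') \<in> fg_rel N M f g"
  unfolding fg_rel_def mem_Collect_eq case_prod_conv
  using assms by blast

lemma fg_relE:
  assumes "(m, m') \<in> fg_rel N M f g"
  obtains k :: nat and ms ns ns'
  where "m \<in> carrier M" and "m' \<in> carrier M" and "1 \<le> k"
    and "\<forall>i\<in>{1..k}. ms i \<in> carrier M \<and> ns i \<in> carrier N \<and> ns' i \<in> carrier N"
    and "m = add M (add M (ms 1) (f (ns 1))) (g (ns' 1))"
    and "\<forall>i\<in>{1..k-1}. add M (add M (ms i) (f (ns' i))) (g (ns i)) =
                      add M (add M (ms (i+1)) (f (ns (i+1)))) (g (ns' (i+1)))"
    and "add M (add M (ms k) (f (ns' k))) (g (ns k)) = m'"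
  using assms unfolding fg_rel_def mem_Collect_eq case_prod_conv by blast

definition fg_move ::
  "('r::{semiring_0, monoid_mult}, 'n) semimod \<Rightarrow> ('r, 'm) semimod \<Rightarrow> ('n \<Rightarrow> 'm) \<Rightarrow> ('n \<Rightarrow> 'm)
     \<Rightarrow> ('m \<times> 'm) set" where
  "fg_move N M f g = {(add M (add M a (f x)) (g y), add M (add M a (f y)) (g x)) | a x y.
     a \<in> carrier M \<and> x \<in> carrier N \<and> y \<in> carrier N}"

lemma fg_moveI:
  "a \<in> carrier M \<Longrightarrow> x \<in> carrier N \<Longrightarrow> y \<in> carrier N \<Longrightarrow>
    (add M (add M a (f x)) (g y), add M (add M a (f y)) (g x)) \<in> fg_move N M f g"
  unfolding fg_move_def by blast

lemma fg_moveE: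
  assumes "(p, q) \<in> fg_move N M f g"
  obtains a x y where "a \<in> carrier M" and "x \<in> carrier N" and "y \<in> carrier N"
    and "p = add M (add M a (f x)) (g y)" and "q = add M (add M a (f y)) (g x)"
  using assms unfolding fg_move_def by blast

lemma (in left_semimodule) fg_rel_eq_trancl_fg_move:
  assumes f: "f ` carrier N \<subseteq> carrier M" and g: "g ` carrier N \<subseteq> carrier M"
  shows "fg_rel N M f g = (fg_move N M f g)\<^sup>+"
proof (rule subset_antisym; rule subrelI)
  fix m m' assume "(m, m') \<in> fg_rel N M f g"
  then obtain k :: nat and ms ns ns' where k: "1 \<le> k"
    and mem: "\<forall>i\<in>{1..k}. ms i \<in> carrier M \<and> ns i \<in> carrier N \<and> ns' i \<in> carrier N"
    and first: "m = add M (add M (ms 1) (f (ns 1))) (g (ns' 1))"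
    and links: "\<forall>i\<in>{1..k-1}. add M (add M (ms i) (f (ns' i))) (g (ns i)) =
                        add M (add M (ms (i+1)) (f (ns (i+1)))) (g (ns' (i+1)))"
    and last: "add M (add M (ms k) (f (ns' k))) (g (ns k)) = m'"
    by (elim fg_relE) blast
  have move: "(add M (add M (ms i) (f (ns i))) (g (ns' i)),
               add M (add M (ms i) (f (ns' i))) (g (ns i))) \<in> fg_move N M f g"
    if "i \<in> {1..k}" for i
    using mem that by (intro fg_moveI) auto
  have "(m, add M (add M (ms j) (f (ns' j))) (g (ns j))) \<in> (fg_move N M f g)\<^sup>+"
    if "1 \<le> j" and "j \<le> k" for j
    using that
  proof (induction j rule: nat_induct_at_least)
    case base
    then show ?case using first move[of 1] k by auto
  next
    case (Suc j)
    then have "add M (add M (ms j) (f (ns' j))) (g (ns j)) =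
               add M (add M (ms (Suc j)) (f (ns (Suc j)))) (g (ns' (Suc j)))"
      using links by simp
    with Suc move[of "Suc j"] show ?case by (auto intro: trancl_into_trancl)
  qed
  with k last show "(m, m') \<in> (fg_move N M f g)\<^sup>+" by blast
next
  have closed: "add M (add M a (f x)) (g y) \<in> carrier M"
    if "a \<in> carrier M" "x \<in> carrier N" "y \<in> carrier N" for a x y
    using that f g by (simp add: image_subset_iff)
  fix m m' assume "(m, m') \<in> (fg_move N M f g)\<^sup>+"
  then show "(m, m') \<in> fg_rel N M f g"
  proof (induction rule: trancl_induct)
    case (base m')
    then obtain a x y where "a \<in> carrier M" "x \<in> carrier N" "y \<in> carrier N"
      and "m = add M (add M a (f x)) (g y)" "m' = add M (add M a (f y)) (g x)"
      by (rule fg_moveE)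
    then show ?case
      by (intro fg_relI[where k = 1 and ms = "\<lambda>_. a" and ns = "\<lambda>_. x" and ns' = "\<lambda>_. y"])
        (simp_all add: closed)
  next
    case (step m' m'')
    obtain a x y where a: "a \<in> carrier M" and x: "x \<in> carrier N" and y: "y \<in> carrier N"
      and m': "m' = add M (add M a (f x)) (g y)" and m'': "m'' = add M (add M a (f y)) (g x)"
      using step.hyps(2) by (rule fg_moveE)
    from step.IH obtain k :: nat and ms ns ns' where m: "m \<in> carrier M" and k: "1 \<le> k"
      and mem: "\<forall>i\<in>{1..k}. ms i \<in> carrier M \<and> ns i \<in> carrier N \<and> ns' i \<in> carrier N"
      and first: "m = add M (add M (ms 1) (f (ns 1))) (g (ns' 1))"
      and links: "\<forall>i\<in>{1..k-1}. add M (add M (ms i) (f (ns' i))) (g (ns i)) =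
                          add M (add M (ms (i+1)) (f (ns (i+1)))) (g (ns' (i+1)))"
      and last: "add M (add M (ms k) (f (ns' k))) (g (ns k)) = m'"
      by (elim fg_relE) blast
    show ?case
    proof (rule fg_relI[where k = "Suc k" and ms = "ms(Suc k := a)" and ns = "ns(Suc k := x)"
          and ns' = "ns'(Suc k := y)"])
      show "m'' \<in> carrier M" using m'' a x y by (simp add: closed)
      show "\<forall>i\<in>{1..Suc k}. (ms(Suc k := a)) i \<in> carrier M \<and> (ns(Suc k := x)) i \<in> carrier N
          \<and> (ns'(Suc k := y)) i \<in> carrier N"
        using mem a x y by (auto simp: le_Suc_eq)
      show "\<forall>i\<in>{1..Suc k - 1}. add M (add M ((ms(Suc k := a)) i) (f ((ns'(Suc k := y)) i)))
            (g ((ns(Suc k := x)) i)) = add M (add M ((ms(Suc k := a)) (i + 1))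
            (f ((ns(Suc k := x)) (i + 1)))) (g ((ns'(Suc k := y)) (i + 1)))"
        using links last m' by (auto simp: nat_less_le)
    qed (use m first k m'' in simp_all)
  qed
qed

locale semimod_hom_pair =
  N: left_semimodule N + M: left_semimodule M
  for N :: "('r::{semiring_0, monoid_mult}, 'n) semimod" and M :: "('r, 'm) semimod" +
  fixes f g :: "'n \<Rightarrow> 'm"
  assumes hom_f: "semimod_hom N M f" and hom_g: "semimod_hom N M g"
begin

lemma f_closed [simp]: "x \<in> carrier N \<Longrightarrow> f x \<in> carrier M"
  by (rule semimod_hom_closed[OF hom_f])

lemma g_closed [simp]: "x \<in> carrier N \<Longrightarrow> g x \<in> carrier M"
  by (rule semimod_hom_closed[OF hom_g])

lemma f_zero [simp]: "f (zero N) = zero M"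
  by (rule semimod_hom_zero[OF N.left_semimodule_axioms M.left_semimodule_axioms hom_f])

lemma g_zero [simp]: "g (zero N) = zero M"
  by (rule semimod_hom_zero[OF N.left_semimodule_axioms M.left_semimodule_axioms hom_g])

lemma fg_rel_eq: "fg_rel N M f g = (fg_move N M f g)\<^sup>+"
  by (rule M.fg_rel_eq_trancl_fg_move) auto

lemma fg_move_subset: "fg_move N M f g \<subseteq> carrier M \<times> carrier M"
  unfolding fg_move_def by auto

lemma refl_on_fg_move: "refl_on (carrier M) (fg_move N M f g)"
proof (rule refl_onI)
  fix m assume m: "m \<in> carrier M"
  then have "(m, m) = (add M (add M m (f (zero N))) (g (zero N)),
                       add M (add M m (f (zero N))) (g (zero N)))"
    by (simp add: M.r_zero)
  also have "\<dots> \<in> fg_move N M f g" using m by (intro fg_moveI) simp_all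
  finally show "(m, m) \<in> fg_move N M f g" .
qed

lemma sym_fg_move: "sym (fg_move N M f g)"
  unfolding fg_move_def sym_def by blast

lemma f_g_in_fg_move:
  assumes "x \<in> carrier N"
  shows "(f x, g x) \<in> fg_move N M f g"
proof -
  have "(f x, g x) = (add M (add M (zero M) (f x)) (g (zero N)),
                      add M (add M (zero M) (f (zero N))) (g x))"
    using assms by (simp add: M.l_zero M.r_zero)
  also have "\<dots> \<in> fg_move N M f g" using assms by (intro fg_moveI) simp_all
  finally show ?thesis .
qed

lemma fg_move_add_left:
  assumes "(p, q) \<in> fg_move N M f g" and c: "c \<in> carrier M"
  shows "(add M c p, add M c q) \<in> fg_move N M f g"
  using assms(1)
proof (rule fg_moveE)
  fix a x y assume axy: "a \<in> carrier M" "x \<in> carrier N" "y \<in> carrier N"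
    and "p = add M (add M a (f x)) (g y)" "q = add M (add M a (f y)) (g x)"
  with c have "(add M c p, add M c q) = (add M (add M (add M c a) (f x)) (g y),
                                          add M (add M (add M c a) (f y)) (g x))"
    by (simp add: M.a_assoc)
  also have "\<dots> \<in> fg_move N M f g" using axy c by (intro fg_moveI) simp_all
  finally show ?thesis .
qed

lemma fg_move_smul:
  assumes "(p, q) \<in> fg_move N M f g"
  shows "(smul M r p, smul M r q) \<in> fg_move N M f g"
  using assms
proof (rule fg_moveE)
  fix a x y assume axy: "a \<in> carrier M" "x \<in> carrier N" "y \<in> carrier N"
    and "p = add M (add M a (f x)) (g y)" "q = add M (add M a (f y)) (g x)"
  then have "(smul M r p, smul M r q) =
      (add M (add M (smul M r a) (f (smul N r x))) (g (smul N r y)),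
       add M (add M (smul M r a) (f (smul N r y))) (g (smul N r x)))"
    by (simp add: M.smul_r_distr semimod_hom_smul[OF hom_f] semimod_hom_smul[OF hom_g])
  also have "\<dots> \<in> fg_move N M f g" using axy by (intro fg_moveI) simp_all
  finally show ?thesis .
qed

lemma congruent_fg_move:
  assumes P: "left_semimodule P" and h: "semimod_hom M P h"
    and hfg: "\<forall>x\<in>carrier N. h (f x) = h (g x)"
  shows "h respects fg_move N M f g"
proof (rule congruentI)
  fix p q assume "(p, q) \<in> fg_move N M f g"
  then obtain a x y where "a \<in> carrier M" "x \<in> carrier N" "y \<in> carrier N"
    and "p = add M (add M a (f x)) (g y)" "q = add M (add M a (f y)) (g x)"
    by (rule fg_moveE)
  with hfg show "h p = h q"
    by (simp add: semimod_hom_add[OF h] semimod_hom_closed[OF h]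
        left_semimodule.a_right_comm[OF P])
qed

lemma semimod_congruence_fg_rel: "semimod_congruence M (fg_rel N M f g)"
proof
  show "equiv (carrier M) (fg_rel N M f g)"
    unfolding fg_rel_eq using fg_move_subset refl_on_fg_move sym_fg_move by (rule equiv_trancl)
  have translate: "(add M c a, add M c a') \<in> fg_rel N M f g"
    if "(a, a') \<in> fg_rel N M f g" and "c \<in> carrier M" for a a' c
    using that unfolding fg_rel_eq by (auto intro: trancl_closed_under_map fg_move_add_left)
  fix a a' b b' assume a: "(a, a') \<in> fg_rel N M f g" and b: "(b, b') \<in> fg_rel N M f g"
  have carrier: "a \<in> carrier M" "a' \<in> carrier M" "b \<in> carrier M"
    using a b by (auto elim: fg_relE)
  have "(add M b a, add M b a') \<in> fg_rel N M f g" using a carrier(3) by (rule translate)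
  then have "(add M a b, add M a' b) \<in> fg_rel N M f g" using carrier by (simp add: M.a_comm)
  moreover have "(add M a' b, add M a' b') \<in> fg_rel N M f g" using b carrier(2) by (rule translate)
  ultimately show "(add M a b, add M a' b') \<in> fg_rel N M f g"
    unfolding fg_rel_eq by (rule trancl_trans)
next
  fix a a' and r :: 'r assume "(a, a') \<in> fg_rel N M f g"
  then show "(smul M r a, smul M r a') \<in> fg_rel N M f g"
    unfolding fg_rel_eq by (auto intro: trancl_closed_under_map fg_move_smul)
qed

sublocale semimod_congruence M "fg_rel N M f g"
  by (rule semimod_congruence_fg_rel)

lemma f_g_in_fg_rel: "x \<in> carrier N \<Longrightarrow> (f x, g x) \<in> fg_rel N M f g"
  unfolding fg_rel_eq by (rule r_into_trancl') (rule f_g_in_fg_move)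

lemma congruent_fg_rel:
  assumes "left_semimodule P" and "semimod_hom M P h"
    and "\<forall>x\<in>carrier N. h (f x) = h (g x)"
  shows "h respects fg_rel N M f g"
  unfolding fg_rel_eq using congruent_fg_move[OF assms] by (rule congruent_trancl)

end

theorem theorem2p13:
  fixes N :: "('r::{semiring_0, monoid_mult}, 'n) semimod"
    and M :: "('r, 'm) semimod"
    and f g :: "'n \<Rightarrow> 'm"
  assumes "semimodule N" and "semimodule M"
    and "semimod_hom N M f" and "semimod_hom N M g"
  defines "Q \<equiv> quot_semimod M (fg_rel N M f g)"
    and "\<nu> \<equiv> quot_map (fg_rel N M f g)"
  shows "semimodule Q \<and> semimod_hom M Q \<nu>
    \<and> (\<forall>x\<in>carrier N. \<nu> (f x) = \<nu> (g x))
    \<and> (\<forall>(P :: ('r, 'p) semimod) h. semimodule P \<longrightarrow> semimod_hom M P h \<longrightarrow>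
          (\<forall>x\<in>carrier N. h (f x) = h (g x)) \<longrightarrow>
          (\<exists>h'. semimod_hom Q P h' \<and> (\<forall>m\<in>carrier M. h' (\<nu> m) = h m) \<and>
                (\<forall>h''. semimod_hom Q P h'' \<and> (\<forall>m\<in>carrier M. h'' (\<nu> m) = h m) \<longrightarrow>
                       (\<forall>X\<in>carrier Q. h'' X = h' X))))"
proof -
  interpret semimod_hom_pair N M f g
    using assms(1-4) by (simp add: semimod_hom_pair_def semimod_hom_pair_axioms_def left_semimodule_def)
  show ?thesis
    unfolding Q_def \<nu>_def
    by (intro conjI allI impI ballI semimodule_quot semimod_hom_quot_map quot_map_eq f_g_in_fg_rel
        quot_universal congruent_fg_rel) (simp_all add: left_semimodule_def)
qed

end
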